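(* Let $(\mathcal A,\varphi,\mathcal F,\Phi)$ be a ncps of type B$'$ with associated infinitesimal ncps $(\mathcal B,\varphi,\varphi')$, let $q\in\mathcal F$ with $q^2=q$, $\Phi(q)=1$ and $(\mathcal A,\{q\})$ cyclic-antimonotone independent, and let $p:=1_{\mathcal B}-q$. Consider the algebra $p\mathcal Bp$ with unit $p$ and the functionals $\psi:=\varphi|_{p\mathcal Bp}$, $\psi':=(\varphi+\varphi')|_{p\mathcal Bp}$. If $(\mathcal A_i)_{i\in I}$ are free subalgebras (containing $1_{\mathcal A}$) in $(\mathcal A,\varphi)$, then $(p\mathcal A_ip)_{i\in I}$ are infinitesimally free in $(p\mathcal Bp,\psi,\psi')$.
   Context: Ncps of type B$'$ $(\mathcal A,\varphi,\mathcal F,\Phi)$: $\mathcal A$ unital complex algebra, $\varphi(1_{\mathcal A})=1$, $\mathcal F$ an algebra which is an $\mathcal A$-bimodule compatible with its multiplication, $\Phi:\mathcal F\to\mathbb C$ linear. $\mathcal B=\mathcal A\oplus\mathcal F$ with product $(a_1,f_1)(a_2,f_2)=(a_1a_2,a_1f_2+f_1a_2+f_1f_2)$, unit $1_{\mathcal A}$; $\varphi(a+f):=\varphi(a)$, $\varphi'(a+f):=\Phi(f)$. Cyclic-antimonotone independence of $(\mathcal A,\{q\})$: $\Phi(a_0qa_1\cdots a_{n-1}qa_n)=\varphi(a_0a_n)\prod_{i=1}^{n-1}\varphi(a_i)\Phi(q^n)$ for $a_l\in\mathcal A$. One has $\psi(p)=1$, $\psi'(p)=0$, so $(p\mathcal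 Bp,\psi,\psi')$ is an infinitesimal ncps. $p\mathcal A_ip=\{pap:a\in\mathcal A_i\}$; infinitesimal freeness of these sets means infinitesimal freeness of the subalgebras of $p\mathcal Bp$ they generate together with $p$. Infinitesimal freeness of unital subalgebras $(\mathcal C_i)$ in $(\mathcal C,\psi,\psi')$: for $i_1\ne\cdots\ne i_n$ and $c_l\in\mathcal C_{i_l}$ with $\psi(c_l)=0$, $\psi(c_1\cdots c_n)=0$ and $\psi'(c_1\cdots c_n)=\psi(c_1c_n)\psi(c_2c_{n-1})\cdots\psi(c_{(n-1)/2}c_{(n+3)/2})\psi'(c_{(n+1)/2})$ if $n$ is odd and $i_1=i_n,i_2=i_{n-1},\dots$, and $0$ otherwise. Freeness of $(\mathcal A_i)$: $\varphi(a_1\cdots a_n)=0$ for alternating indices and centered $a_l\in\mathcal A_{i_l}$. *)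

theory Defs
  imports Complex_Main
begin

definition cplx_alg :: "(complex \<Rightarrow> 'a::ring \<Rightarrow> 'a) \<Rightarrow> bool" where
  "cplx_alg s \<longleftrightarrow> module s \<and>
     (\<forall>c x y. s c (x * y) = s c x * y \<and> s c (x * y) = x * s c y)"

text \<open>F is an A-bimodule (left action lm, right action rm), complex-bilinear, unital
  (so that 1_A is the unit of B), and compatible with the multiplication of F.\<close>
definition bimod_compat ::
  "(complex \<Rightarrow> 'a::ring_1 \<Rightarrow> 'a) \<Rightarrow> (complex \<Rightarrow> 'f::ring \<Rightarrow> 'f) \<Rightarrow>
   ('a \<Rightarrow> 'f \<Rightarrow> 'f) \<Rightarrow> ('f \<Rightarrow> 'a \<Rightarrow> 'f) \<Rightarrow> bool" where
  "bimod_compat sA sF lm rm \<longleftrightarrow>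
     (\<forall>a b f g c.
        lm (a + b) f = lm a f + lm b f \<and> lm a (f + g) = lm a f + lm a g \<and>
        rm f (a + b) = rm f a + rm f b \<and> rm (f + g) a = rm f a + rm g a \<and>
        lm (sA c a) f = sF c (lm a f) \<and> lm a (sF c f) = sF c (lm a f) \<and>
        rm f (sA c a) = sF c (rm f a) \<and> rm (sF c f) a = sF c (rm f a) \<and>
        lm (a * b) f = lm a (lm b f) \<and> lm 1 f = f \<and>
        rm f (a * b) = rm (rm f a) b \<and> rm f 1 = f \<and>
        rm (lm a f) b = lm a (rm f b) \<and>
        lm a (f * g) = lm a f * g \<and> rm (f * g) a = f * rm g a \<and>
        rm f a * g = f * lm a g)"

definition ncps_typeB' ::
  "(complex \<Rightarrow> 'a::ring_1 \<Rightarrow> 'a) \<Rightarrow> ('a \<Rightarrow> complex) \<Rightarrow>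
   (complex \<Rightarrow> 'f::ring \<Rightarrow> 'f) \<Rightarrow> ('a \<Rightarrow> 'f \<Rightarrow> 'f) \<Rightarrow> ('f \<Rightarrow> 'a \<Rightarrow> 'f) \<Rightarrow>
   ('f \<Rightarrow> complex) \<Rightarrow> bool" where
  "ncps_typeB' sA \<phi> sF lm rm \<Phi> \<longleftrightarrow>
     cplx_alg sA \<and> cplx_alg sF \<and> bimod_compat sA sF lm rm \<and>
     module_hom sA (*) \<phi> \<and> \<phi> 1 = 1 \<and> module_hom sF (*) \<Phi>"

definition bplus :: "'a::ring_1 \<times> 'f::ring \<Rightarrow> 'a \<times> 'f \<Rightarrow> 'a \<times> 'f" where
  "bplus x y = (fst x + fst y, snd x + snd y)"

definition bscale :: "(complex \<Rightarrow> 'a \<Rightarrow> 'a) \<Rightarrow> (complex \<Rightarrow> 'f \<Rightarrow> 'f) \<Rightarrow>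
    complex \<Rightarrow> 'a \<times> 'f \<Rightarrow> 'a \<times> 'f" where
  "bscale sA sF c x = (sA c (fst x), sF c (snd x))"

definition bmult :: "('a::ring_1 \<Rightarrow> 'f::ring \<Rightarrow> 'f) \<Rightarrow> ('f \<Rightarrow> 'a \<Rightarrow> 'f) \<Rightarrow>
    'a \<times> 'f \<Rightarrow> 'a \<times> 'f \<Rightarrow> 'a \<times> 'f" where
  "bmult lm rm x y =
     (fst x * fst y, lm (fst x) (snd y) + rm (snd x) (fst y) + snd x * snd y)"

definition mprod :: "('c \<Rightarrow> 'c \<Rightarrow> 'c) \<Rightarrow> 'c \<Rightarrow> 'c list \<Rightarrow> 'c" where
  "mprod mult one cs = foldr mult cs one"

fun fpow :: "nat \<Rightarrow> 'f::ring \<Rightarrow> 'f" where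
  "fpow 0 f = 0"
| "fpow (Suc 0) f = f"
| "fpow (Suc (Suc n)) f = f * fpow (Suc n) f"

text \<open>The word a_0 q a_1 q ... q a_n in B, for a nonempty list [a_0,...,a_n].\<close>
fun qword :: "('a::ring_1 \<Rightarrow> 'f::ring \<Rightarrow> 'f) \<Rightarrow> ('f \<Rightarrow> 'a \<Rightarrow> 'f) \<Rightarrow> 'f \<Rightarrow>
    'a list \<Rightarrow> 'a \<times> 'f" where
  "qword lm rm q [] = (1, 0)"
| "qword lm rm q [a] = (a, 0)"
| "qword lm rm q (a # b # as) =
     bmult lm rm (a, 0) (bmult lm rm (0, q) (qword lm rm q (b # as)))"

text \<open>Cyclic-antimonotone independence of (A, {q}):
  Phi(a_0 q a_1 ... a_{n-1} q a_n) = phi(a_0 a_n) prod_{i=1}^{n-1} phi(a_i) Phi(q^n), n \<ge> 1.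
  Note the word lies in F, so Phi is applied to its F-component (i.e. phi' of it).\<close>
definition cyc_antimon_indep ::
  "('a::ring_1 \<Rightarrow> complex) \<Rightarrow> ('a \<Rightarrow> 'f::ring \<Rightarrow> 'f) \<Rightarrow> ('f \<Rightarrow> 'a \<Rightarrow> 'f) \<Rightarrow>
   ('f \<Rightarrow> complex) \<Rightarrow> 'f \<Rightarrow> bool" where
  "cyc_antimon_indep \<phi> lm rm \<Phi> q \<longleftrightarrow>
     (\<forall>as. length as \<ge> 2 \<longrightarrow>
        (let n = length as - 1 in
         \<Phi> (snd (qword lm rm q as)) =
           \<phi> (as ! 0 * as ! n) * (\<Prod>i\<in>{1..<n}. \<phi> (as ! i)) * \<Phi> (fpow n q)))"

definition unital_subalg :: "(complex \<Rightarrow> 'a::ring_1 \<Rightarrow> 'a) \<Rightarrow> 'a set \<Rightarrow> bool" where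
  "unital_subalg sA S \<longleftrightarrow> 1 \<in> S \<and>
     (\<forall>x\<in>S. \<forall>y\<in>S. x + y \<in> S \<and> x * y \<in> S) \<and> (\<forall>c. \<forall>x\<in>S. sA c x \<in> S)"

definition free_family :: "('a::ring_1 \<Rightarrow> complex) \<Rightarrow> 'i set \<Rightarrow> ('i \<Rightarrow> 'a set) \<Rightarrow> bool" where
  "free_family \<phi> I A \<longleftrightarrow>
     (\<forall>is as. is \<noteq> [] \<and> length as = length is \<and> set is \<subseteq> I \<and> successively (\<noteq>) is \<and>
        (\<forall>k<length is. as ! k \<in> A (is ! k) \<and> \<phi> (as ! k) = 0) \<longrightarrow>
        \<phi> (prod_list as) = 0)"

inductive_set gen_alg :: "('c \<Rightarrow> 'c \<Rightarrow> 'c) \<Rightarrow> (complex \<Rightarrow> 'c \<Rightarrow> 'c) \<Rightarrow>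
    ('c \<Rightarrow> 'c \<Rightarrow> 'c) \<Rightarrow> 'c \<Rightarrow> 'c set \<Rightarrow> 'c set"
  for add scale mult one S where
  gen: "x \<in> S \<Longrightarrow> x \<in> gen_alg add scale mult one S"
| unit: "one \<in> gen_alg add scale mult one S"
| add: "x \<in> gen_alg add scale mult one S \<Longrightarrow> y \<in> gen_alg add scale mult one S \<Longrightarrow>
          add x y \<in> gen_alg add scale mult one S"
| scale: "x \<in> gen_alg add scale mult one S \<Longrightarrow> scale c x \<in> gen_alg add scale mult one S"
| mult: "x \<in> gen_alg add scale mult one S \<Longrightarrow> y \<in> gen_alg add scale mult one S \<Longrightarrow>
          mult x y \<in> gen_alg add scale mult one S"

text \<open>Infinitesimal freeness of the unital subalgebras (C_i)_{i \<in> I} in (C, psi, psi'),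
  where C has multiplication mult and unit one.  Lists are 0-indexed: c_{l} is cs!(l-1).\<close>
definition inf_free :: "('c \<Rightarrow> 'c \<Rightarrow> 'c) \<Rightarrow> 'c \<Rightarrow> ('c \<Rightarrow> complex) \<Rightarrow> ('c \<Rightarrow> complex) \<Rightarrow>
    'i set \<Rightarrow> ('i \<Rightarrow> 'c set) \<Rightarrow> bool" where
  "inf_free mult one \<psi> \<psi>' I C \<longleftrightarrow>
     (\<forall>is cs. is \<noteq> [] \<and> length cs = length is \<and> set is \<subseteq> I \<and> successively (\<noteq>) is \<and>
        (\<forall>k<length is. cs ! k \<in> C (is ! k) \<and> \<psi> (cs ! k) = 0) \<longrightarrow>
        \<psi> (mprod mult one cs) = 0 \<and>
        \<psi>' (mprod mult one cs) =
          (let n = length cs in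
           if odd n \<and> (\<forall>k<n. is ! k = is ! (n - 1 - k))
           then (\<Prod>k<n div 2. \<psi> (mult (cs ! k) (cs ! (n - 1 - k)))) * \<psi>' (cs ! (n div 2))
           else 0))"

end

(* Everything needed about an element of B is how psi' = phi + Phi sees it between contexts that
   are linear combinations of q-words a_0 q a_1 ... q a_n.  By cyclic-antimonotone independence
   (q idempotent, Phi q = 1) such contexts cannot tell q m q from phi(m) q, so every element c of
   the algebra generated by the p a p with a in A_i behaves like fst c + sum_j b_j q e_j with
   b_j, e_j in A_i; moreover c = p c p and q p = 0 = p q give psi'(q r q) = - phi(fst c) for its
   q-part r.  For centered c_1, ..., c_n with alternating indices these normal forms, together
   with the freeness of the A_i, yield
     psi'(c_1 ... c_n) = sum_k psi'(c_k) phi(y_1 ... y_(k-1) y_(k+1) ... y_n),   y_k = fst c_k,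
   and by freeness again the k-th term vanishes unless n = 2m - 1, k = m and the index word is a
   palindrome, in which case it equals psi'(c_m) times the product of the phi(y_k y_(n+1-k))
   over k < m. *)
theory Submission
  imports Defs
begin

lemma prod_list_map_eq_prod_lessThan: "prod_list (map f xs) = (\<Prod>i<length xs. f (xs ! i))"
  by (induction xs) (simp_all add: prod.lessThan_Suc_shift del: prod.lessThan_Suc)

lemma rev_eq_iff_nth: "rev xs = xs \<longleftrightarrow> (\<forall>k<length xs. xs ! k = xs ! (length xs - 1 - k))"
proof -
  have "rev xs ! k = xs ! (length xs - 1 - k)" if "k < length xs" for k
    using that by (simp add: rev_nth)
  then show ?thesis
    by (metis length_rev nth_equalityI)
qed

lemma rev_take_eq_drop_iff:
  assumes "length xs = Suc (2 * h)"
  shows "rev (take h xs) = drop (Suc h) xs \<longleftrightarrow> rev xs = xs"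
proof -
  have xs: "xs = take h xs @ xs ! h # drop (Suc h) xs"
    by (rule id_take_nth_drop) (use assms in simp)
  have "rev xs = rev (drop (Suc h) xs) @ xs ! h # rev (take h xs)"
    by (subst xs) simp
  moreover have "length (rev (drop (Suc h) xs)) = length (take h xs)"
    using assms by simp
  ultimately have "rev xs = xs \<longleftrightarrow> rev (drop (Suc h) xs) = take h xs \<and> rev (take h xs) = drop (Suc h) xs"
    by (metis append_eq_append_conv list.inject xs)
  then show ?thesis by (metis rev_rev_ident)
qed

locale algebra_state =
  fixes sA :: "complex \<Rightarrow> 'a::ring_1 \<Rightarrow> 'a" and \<phi> :: "'a \<Rightarrow> complex"
  assumes alg: "cplx_alg sA" and phi_hom: "module_hom sA (*) \<phi>" and phi_one[simp]: "\<phi> 1 = 1"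
begin

lemma sA_mult_left[simp]: "sA c x * y = sA c (x * y)"
  and sA_mult_right[simp]: "x * sA c y = sA c (x * y)"
  using alg unfolding cplx_alg_def by metis+

lemma module_sA: "module sA"
  using alg unfolding cplx_alg_def by blast

lemma sA_add[simp]: "sA c (x + y) = sA c x + sA c y"
  using module.scale_right_distrib[OF module_sA] by blast
lemma sA_zero[simp]: "sA c 0 = 0"
  using module.scale_zero_right[OF module_sA] by blast
lemma sA_minus[simp]: "sA c (- x) = - sA c x"
  using module.scale_minus_right[OF module_sA] by blast
lemma sA_sA[simp]: "sA c (sA d x) = sA (c * d) x"
  using module.scale_scale[OF module_sA] by blast
lemma sA_one[simp]: "sA 1 x = x"
  using module.scale_one[OF module_sA] by blast
lemma sA_uminus_left[simp]: "sA (- c) x = - sA c x"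
  using module.scale_minus_left[OF module_sA] by blast

lemma phi_add[simp]: "\<phi> (x + y) = \<phi> x + \<phi> y"
  using module_hom.add[OF phi_hom] by blast
lemma phi_scale[simp]: "\<phi> (sA c x) = c * \<phi> x"
  using module_hom.scale[OF phi_hom] by blast
lemma phi_zero[simp]: "\<phi> 0 = 0"
  using module_hom.zero[OF phi_hom] by blast
lemma phi_minus[simp]: "\<phi> (- x) = - \<phi> x"
  using module_hom.neg[OF phi_hom] by blast
lemma phi_diff[simp]: "\<phi> (x - y) = \<phi> x - \<phi> y"
  using module_hom.diff[OF phi_hom] by blast

definition center :: "'a \<Rightarrow> 'a" where
  "center x = x - sA (\<phi> x) 1"

lemma phi_center[simp]: "\<phi> (center x) = 0"
  by (simp add: center_def)

lemma center_plus_scalar: "x = center x + sA (\<phi> x) 1"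
  by (simp add: center_def)

lemma unital_subalgD:
  assumes "unital_subalg sA S"
  shows "1 \<in> S" "x \<in> S \<Longrightarrow> y \<in> S \<Longrightarrow> x + y \<in> S" "x \<in> S \<Longrightarrow> y \<in> S \<Longrightarrow> x * y \<in> S"
    "x \<in> S \<Longrightarrow> sA c x \<in> S"
  using assms unfolding unital_subalg_def by blast+

lemma unital_subalg_uminus: "unital_subalg sA S \<Longrightarrow> x \<in> S \<Longrightarrow> - x \<in> S"
  using unital_subalgD(4)[where c = "- 1"] by simp

lemma center_mem: "unital_subalg sA S \<Longrightarrow> x \<in> S \<Longrightarrow> center x \<in> S"
  unfolding center_def diff_conv_add_uminus
  by (intro unital_subalgD(2,4) unital_subalg_uminus unital_subalgD(1))

end

section \<open>Freeness in (A, \<phi>)\<close>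

locale free_subalgebras = algebra_state sA \<phi>
  for sA :: "complex \<Rightarrow> 'a::ring_1 \<Rightarrow> 'a" and \<phi> :: "'a \<Rightarrow> complex" +
  fixes I :: "'i set" and A :: "'i \<Rightarrow> 'a set"
  assumes subalg: "\<forall>i\<in>I. unital_subalg sA (A i)"
    and free: "free_family \<phi> I A"
begin

lemma mult_mem: "i \<in> I \<Longrightarrow> x \<in> A i \<Longrightarrow> y \<in> A i \<Longrightarrow> x * y \<in> A i"
  using subalg unital_subalgD(3) by blast

definition centered_alternating :: "('i \<times> 'a) list \<Rightarrow> bool" where
  "centered_alternating ps \<longleftrightarrow> successively (\<lambda>x y. fst x \<noteq> fst y) ps \<and>
     (\<forall>(i, x)\<in>set ps. i \<in> I \<and> x \<in> A i \<and> \<phi> x = 0)"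

abbreviation prods :: "('i \<times> 'a) list \<Rightarrow> 'a" where
  "prods ps \<equiv> prod_list (map snd ps)"

lemma centered_alternating_Nil[simp]: "centered_alternating []"
  by (simp add: centered_alternating_def)

lemma centered_alternating_Cons:
  "centered_alternating ((i, x) # ps) \<longleftrightarrow>
     i \<in> I \<and> x \<in> A i \<and> \<phi> x = 0 \<and> centered_alternating ps \<and> (ps = [] \<or> i \<noteq> fst (hd ps))"
  unfolding centered_alternating_def by (cases ps) auto

lemma centered_alternating_append:
  "centered_alternating (ps @ rs) \<longleftrightarrow> centered_alternating ps \<and> centered_alternating rs \<and>
     (ps = [] \<or> rs = [] \<or> fst (last ps) \<noteq> fst (hd rs))"
  unfolding centered_alternating_def by (auto simp: successively_append_iff)

lemma centered_alternating_rev[simp]: "centered_alternating (rev ps) \<longleftrightarrow> centered_alternating ps"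
proof -
  have swap: "(\<lambda>x y. fst y \<noteq> fst x) = (\<lambda>(x::'i \<times> 'a) y. fst x \<noteq> fst y)"
    by (intro ext) auto
  show ?thesis
    unfolding centered_alternating_def successively_rev swap by simp
qed

lemma centered_alternating_take: "centered_alternating ps \<Longrightarrow> centered_alternating (take k ps)"
  and centered_alternating_drop: "centered_alternating ps \<Longrightarrow> centered_alternating (drop k ps)"
  using centered_alternating_append[of "take k ps" "drop k ps"] by simp_all

lemma phi_prods_centered_alternating:
  assumes "centered_alternating ps" and "ps \<noteq> []"
  shows "\<phi> (prods ps) = 0"
  using free assms unfolding free_family_def centered_alternating_def
  by (elim allE[of _ "map fst ps"] allE[of _ "map snd ps"] mp)
    (force simp: successively_map dest: nth_mem)

text \<open>Centering the inserted factor leaves a longer centered alternating product.\<close>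
lemma phi_insert_factor:
  assumes ps: "centered_alternating ps" and rs: "centered_alternating rs"
    and i: "i \<in> I" and w: "w \<in> A i"
    and "ps \<noteq> [] \<Longrightarrow> fst (last ps) \<noteq> i" and "rs \<noteq> [] \<Longrightarrow> fst (hd rs) \<noteq> i"
  shows "\<phi> (prods ps * w * prods rs) = \<phi> w * \<phi> (prods ps * prods rs)"
proof -
  have "centered_alternating (ps @ [(i, center w)] @ rs)"
    using assms center_mem[of "A i" w] subalg
    by (auto simp: centered_alternating_append centered_alternating_Cons)
  then have "\<phi> (prods ps * center w * prods rs) = 0"
    using phi_prods_centered_alternating by (fastforce simp: mult.assoc)
  moreover have "prods ps * w * prods rs = prods ps * center w * prods rs + sA (\<phi> w) (prods ps * prods rs)"
    by (subst center_plus_scalar[of w]) (simp add: algebra_simps)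
  ultimately show ?thesis by simp
qed

lemma phi_prods_mult_eq_0:
  assumes "centered_alternating (pre @ (i, y) # ps)" "pre \<noteq> []" "b \<in> A i"
  shows "\<phi> (prods pre * b) = 0"
proof -
  have "centered_alternating pre" "i \<in> I" "fst (last pre) \<noteq> i"
    using assms by (auto simp: centered_alternating_append centered_alternating_Cons)
  then have "\<phi> (prods pre * b * prods []) = \<phi> b * \<phi> (prods pre * prods [])"
    using assms(3) by (intro phi_insert_factor) auto
  then show ?thesis
    using phi_prods_centered_alternating[OF \<open>centered_alternating pre\<close> assms(2)] by simp
qed

lemma phi_rev_prods_mult_prods:
  "centered_alternating ps \<Longrightarrow> centered_alternating rs \<Longrightarrow>
   \<phi> (prods (rev ps) * prods rs) =
     (if map fst ps = map fst rs then \<Prod>k<length ps. \<phi> (snd (ps ! k) * snd (rs ! k)) else 0)"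
proof (induction ps arbitrary: rs)
  case Nil
  then show ?case using phi_prods_centered_alternating[of rs] by auto
next
  case (Cons p ps)
  obtain i x where p: "p = (i, x)" by fastforce
  show ?case
  proof (cases rs)
    case Nil
    have "centered_alternating (rev (p # ps))"
      using Cons.prems(1) by (simp only: centered_alternating_rev)
    then have "\<phi> (prods (rev (p # ps))) = 0"
      by (rule phi_prods_centered_alternating) simp
    then show ?thesis
      using Nil by simp
  next
    case (Cons r rs')
    obtain j y where r: "r = (j, y)" by fastforce
    have ps: "centered_alternating ps" and rs': "centered_alternating rs'"
      using Cons.prems \<open>rs = r # rs'\<close> p r by (auto simp: centered_alternating_Cons)
    show ?thesis
    proof (cases "i = j")
      case False
      have "centered_alternating (rev ps @ [p, r] @ rs')"
        using Cons.prems \<open>rs = r # rs'\<close> p r False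
        by (auto simp: centered_alternating_append centered_alternating_Cons last_rev)
      then have "\<phi> (prods (rev ps @ [p, r] @ rs')) = 0"
        by (rule phi_prods_centered_alternating) simp
      then show ?thesis using False \<open>rs = r # rs'\<close> p r by (simp add: mult.assoc)
    next
      case True
      have "i \<in> I" and "x \<in> A i" "y \<in> A i"
        using Cons.prems \<open>rs = r # rs'\<close> p r True by (auto simp: centered_alternating_Cons)
      have "\<phi> (prods (rev (p # ps)) * prods rs) = \<phi> (prods (rev ps) * (x * y) * prods rs')"
        using \<open>rs = r # rs'\<close> p r by (simp add: mult.assoc)
      also have "\<dots> = \<phi> (x * y) * \<phi> (prods (rev ps) * prods rs')"
        using Cons.prems \<open>rs = r # rs'\<close> p r True ps rs' mult_mem \<open>i \<in> I\<close> \<open>x \<in> A i\<close> \<open>y \<in> A i\<close>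
        by (intro phi_insert_factor) (auto simp: centered_alternating_Cons last_rev)
      also note Cons.IH[OF ps rs']
      finally show ?thesis
        using True \<open>rs = r # rs'\<close> p r by (simp add: prod.lessThan_Suc_shift del: prod.lessThan_Suc)
    qed
  qed
qed

lemma phi_prods_take_drop_eq_0:
  assumes zs: "centered_alternating zs" and k: "k < length zs"
    and not_mid: "\<not> (length zs = Suc (2 * k) \<and> rev (map fst zs) = map fst zs)"
  shows "\<phi> (prods (take k zs) * prods (drop (Suc k) zs)) = 0"
proof -
  have "map fst (rev (take k zs)) \<noteq> map fst (drop (Suc k) zs)"
  proof
    assume eq: "map fst (rev (take k zs)) = map fst (drop (Suc k) zs)"
    then have "length (rev (take k zs)) = length (drop (Suc k) zs)"
      by (metis length_map)
    then have n: "length zs = Suc (2 * k)"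
      using k by simp
    with eq have "rev (map fst zs) = map fst zs"
      using rev_take_eq_drop_iff[of "map fst zs" k] by (simp add: rev_map take_map drop_map)
    with n not_mid show False by blast
  qed
  then show ?thesis
    using phi_rev_prods_mult_prods[of "rev (take k zs)" "drop (Suc k) zs"] zs
    by (simp add: centered_alternating_take centered_alternating_drop)
qed

lemma phi_prods_take_drop_mid:
  assumes zs: "centered_alternating zs" and n: "length zs = Suc (2 * h)"
    and pal: "rev (map fst zs) = map fst zs"
  shows "\<phi> (prods (take h zs) * prods (drop (Suc h) zs)) =
    (\<Prod>k<h. \<phi> (snd (zs ! k) * snd (zs ! (length zs - 1 - k))))"
proof -
  have "map fst (rev (take h zs)) = map fst (drop (Suc h) zs)"
    using rev_take_eq_drop_iff[of "map fst zs" h] n pal by (simp add: rev_map take_map drop_map)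
  then have "\<phi> (prods (take h zs) * prods (drop (Suc h) zs)) =
      (\<Prod>j<h. \<phi> (snd (rev (take h zs) ! j) * snd (drop (Suc h) zs ! j)))"
    using phi_rev_prods_mult_prods[of "rev (take h zs)" "drop (Suc h) zs"] zs n
    by (simp add: centered_alternating_take centered_alternating_drop)
  also have "\<dots> = (\<Prod>j<h. (\<lambda>k. \<phi> (snd (zs ! k) * snd (zs ! (length zs - 1 - k)))) (h - Suc j))"
    using n by (intro prod.cong) (auto simp: rev_nth)
  also have "\<dots> = (\<Prod>k<h. \<phi> (snd (zs ! k) * snd (zs ! (length zs - 1 - k))))"
    by (rule prod.nat_diff_reindex)
  finally show ?thesis .
qed

lemma sum_phi_prods_omit_one:
  assumes zs: "centered_alternating zs"
  shows "(\<Sum>k<length zs. f k * \<phi> (prods (take k zs) * prods (drop (Suc k) zs))) =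
    (if odd (length zs) \<and> rev (map fst zs) = map fst zs
     then (\<Prod>k<length zs div 2. \<phi> (snd (zs ! k) * snd (zs ! (length zs - 1 - k)))) * f (length zs div 2)
     else 0)"
proof (cases "odd (length zs) \<and> rev (map fst zs) = map fst zs")
  case True
  define h where "h = length zs div 2"
  have n: "length zs = Suc (2 * h)"
    using True by (simp add: h_def)
  have "(\<Sum>k<length zs. f k * \<phi> (prods (take k zs) * prods (drop (Suc k) zs))) =
      (\<Sum>k\<in>{h}. f k * \<phi> (prods (take k zs) * prods (drop (Suc k) zs)))"
    using n by (intro sum.mono_neutral_right) (auto simp: phi_prods_take_drop_eq_0[OF zs])
  then show ?thesis
    using True phi_prods_take_drop_mid[OF zs n] by (simp add: h_def mult.commute)
next
  case False
  have "\<phi> (prods (take k zs) * prods (drop (Suc k) zs)) = 0" if "k < length zs" for k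
    using False by (intro phi_prods_take_drop_eq_0[OF zs that]) auto
  then show ?thesis
    unfolding if_not_P[OF False] by simp
qed

end

notation bplus (infixl "\<oplus>" 65)

locale typeB'_space =
  fixes sA :: "complex \<Rightarrow> 'a::ring_1 \<Rightarrow> 'a" and \<phi> :: "'a \<Rightarrow> complex"
    and sF :: "complex \<Rightarrow> 'f::ring \<Rightarrow> 'f"
    and lm :: "'a \<Rightarrow> 'f \<Rightarrow> 'f" and rm :: "'f \<Rightarrow> 'a \<Rightarrow> 'f"
    and \<Phi> :: "'f \<Rightarrow> complex" and q :: 'f
  assumes ncps: "ncps_typeB' sA \<phi> sF lm rm \<Phi>"
    and q_idem: "q * q = q"
    and q_norm: "\<Phi> q = 1"
    and q_cai: "cyc_antimon_indep \<phi> lm rm \<Phi> q"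
begin

sublocale algebra_state sA \<phi>
  using ncps unfolding ncps_typeB'_def algebra_state_def by auto

lemma module_sF: "module sF" and Phi_hom: "module_hom sF (*) \<Phi>"
  using ncps unfolding ncps_typeB'_def cplx_alg_def by auto

lemma sF_mult_left[simp]: "sF c f * g = sF c (f * g)"
  and sF_mult_right[simp]: "f * sF c g = sF c (f * g)"
  using ncps unfolding ncps_typeB'_def cplx_alg_def by metis+

lemma sF_add[simp]: "sF c (f + g) = sF c f + sF c g"
  using module.scale_right_distrib[OF module_sF] by blast
lemma sF_zero[simp]: "sF c 0 = 0"
  using module.scale_zero_right[OF module_sF] by blast
lemma sF_minus[simp]: "sF c (- f) = - sF c f"
  using module.scale_minus_right[OF module_sF] by blast
lemma sF_sF[simp]: "sF c (sF d f) = sF (c * d) f"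
  using module.scale_scale[OF module_sF] by blast
lemma sF_one[simp]: "sF 1 f = f"
  using module.scale_one[OF module_sF] by blast
lemma sF_zero_left[simp]: "sF 0 f = 0"
  using module.scale_zero_left[OF module_sF] by blast

lemma Phi_add[simp]: "\<Phi> (f + g) = \<Phi> f + \<Phi> g"
  using module_hom.add[OF Phi_hom] by blast
lemma Phi_scale[simp]: "\<Phi> (sF c f) = c * \<Phi> f"
  using module_hom.scale[OF Phi_hom] by blast
lemma Phi_zero[simp]: "\<Phi> 0 = 0"
  using module_hom.zero[OF Phi_hom] by blast
lemma Phi_diff[simp]: "\<Phi> (f - g) = \<Phi> f - \<Phi> g"
  using module_hom.diff[OF Phi_hom] by blast

lemma lm_add_left[simp]: "lm (a + b) f = lm a f + lm b f"
  and lm_add_right[simp]: "lm a (f + g) = lm a f + lm a g"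
  and rm_add_right[simp]: "rm f (a + b) = rm f a + rm f b"
  and rm_add_left[simp]: "rm (f + g) a = rm f a + rm g a"
  and lm_sA[simp]: "lm (sA c a) f = sF c (lm a f)"
  and lm_sF[simp]: "lm a (sF c f) = sF c (lm a f)"
  and rm_sA[simp]: "rm f (sA c a) = sF c (rm f a)"
  and rm_sF[simp]: "rm (sF c f) a = sF c (rm f a)"
  and lm_mult[simp]: "lm (a * b) f = lm a (lm b f)"
  and lm_one[simp]: "lm 1 f = f"
  and rm_mult[simp]: "rm f (a * b) = rm (rm f a) b"
  and rm_one[simp]: "rm f 1 = f"
  and rm_lm[simp]: "rm (lm a f) b = lm a (rm f b)"
  and lm_times[simp]: "lm a (f * g) = lm a f * g"
  and rm_times[simp]: "rm (f * g) a = f * rm g a"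
  and rm_times_lm[simp]: "rm f a * g = f * lm a g"
  using ncps unfolding ncps_typeB'_def bimod_compat_def by blast+

lemma lm_rm_times[simp]: "lm a (rm f b) * g = lm a f * lm b g"
  by (metis lm_times rm_times_lm)

lemma lm_zero_left[simp]: "lm 0 f = 0"
  using lm_add_left[of 0 0 f] by simp
lemma lm_zero_right[simp]: "lm a 0 = 0"
  using lm_add_right[of a 0 0] by simp
lemma rm_zero_left[simp]: "rm 0 a = 0"
  using rm_add_left[of 0 0 a] by simp
lemma rm_zero_right[simp]: "rm f 0 = 0"
  using rm_add_right[of f 0 0] by simp
lemma lm_uminus_left[simp]: "lm (- a) f = - lm a f"
  using lm_add_left[of a "- a" f] by (simp add: add_eq_0_iff)
lemma lm_uminus_right[simp]: "lm a (- f) = - lm a f"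
  using lm_add_right[of a f "- f"] by (simp add: add_eq_0_iff)
lemma rm_uminus_right[simp]: "rm f (- a) = - rm f a"
  using rm_add_right[of f a "- a"] by (simp add: add_eq_0_iff)
lemma rm_uminus_left[simp]: "rm (- f) a = - rm f a"
  using rm_add_left[of f "- f" a] by (simp add: add_eq_0_iff)

lemma rm_diff_right[simp]: "rm f (a - b) = rm f a - rm f b"
  by (metis diff_conv_add_uminus rm_add_right rm_uminus_right)

abbreviation bprod :: "'a \<times> 'f \<Rightarrow> 'a \<times> 'f \<Rightarrow> 'a \<times> 'f" (infixl "\<star>" 70) where
  "x \<star> y \<equiv> bmult lm rm x y"

abbreviation bscal :: "complex \<Rightarrow> 'a \<times> 'f \<Rightarrow> 'a \<times> 'f" (infixr "\<cdot>" 75) where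
  "c \<cdot> x \<equiv> bscale sA sF c x"

abbreviation word :: "'a list \<Rightarrow> 'a \<times> 'f" where
  "word as \<equiv> qword lm rm q as"

abbreviation Q :: "'a \<times> 'f" where
  "Q \<equiv> (0, q)"

abbreviation p :: "'a \<times> 'f" where
  "p \<equiv> (1, - q)"

definition \<psi>' :: "'a \<times> 'f \<Rightarrow> complex" where
  "\<psi>' x = \<phi> (fst x) + \<Phi> (snd x)"

lemma bprod_pair[simp]: "(a, f) \<star> (b, g) = (a * b, lm a g + rm f b + f * g)"
  by (simp add: bmult_def)
lemma bplus_pair[simp]: "(a, f) \<oplus> (b, g) = (a + b, f + g)"
  by (simp add: bplus_def)
lemma bscal_pair[simp]: "c \<cdot> (a, f) = (sA c a, sF c f)"
  by (simp add: bscale_def)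

lemma bprod_assoc: "x \<star> y \<star> z = x \<star> (y \<star> z)"
  by (cases x; cases y; cases z) (simp add: algebra_simps)
lemma bprod_bplus_left: "(x \<oplus> y) \<star> z = x \<star> z \<oplus> y \<star> z"
  by (cases x; cases y; cases z) (simp add: algebra_simps)
lemma bprod_bplus_right: "x \<star> (y \<oplus> z) = x \<star> y \<oplus> x \<star> z"
  by (cases x; cases y; cases z) (simp add: algebra_simps)
lemma bprod_bscal_left: "c \<cdot> x \<star> y = c \<cdot> (x \<star> y)"
  by (cases x; cases y) (simp add: algebra_simps)
lemma bprod_bscal_right: "x \<star> c \<cdot> y = c \<cdot> (x \<star> y)"
  by (cases x; cases y) (simp add: algebra_simps)
lemma bplus_assoc: "x \<oplus> y \<oplus> z = x \<oplus> (y \<oplus> z)"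
  by (cases x; cases y; cases z) (simp add: algebra_simps)
lemma bscal_bplus: "c \<cdot> (x \<oplus> y) = c \<cdot> x \<oplus> c \<cdot> y"
  by (cases x; cases y) simp
lemma bscal_bscal: "c \<cdot> d \<cdot> x = (c * d) \<cdot> x"
  by (cases x) simp
lemma bprod_zero_left[simp]: "(0, 0) \<star> x = (0, 0)"
  and bprod_zero_right[simp]: "x \<star> (0, 0) = (0, 0)"
  and bprod_one_left[simp]: "(1, 0) \<star> x = x"
  and bprod_one_right[simp]: "x \<star> (1, 0) = x"
  and bplus_zero_left[simp]: "(0, 0) \<oplus> x = x"
  and bscal_one[simp]: "1 \<cdot> x = x"
  by (cases x; simp)+

lemma fst_bplus[simp]: "fst (x \<oplus> y) = fst x + fst y"
  and fst_bscal[simp]: "fst (k \<cdot> x) = sA k (fst x)"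
  and fst_bprod[simp]: "fst (x \<star> y) = fst x * fst y"
  by (simp_all add: bplus_def bscale_def bmult_def)

lemma psi'_embed[simp]: "\<psi>' (a, 0) = \<phi> a"
  by (simp add: \<psi>'_def)

lemma psi'_bprod_p: "\<psi>' (x \<star> p) = \<psi>' x - \<psi>' (x \<star> Q)"
  by (cases x) (simp add: \<psi>'_def)

lemma psi'_bplus: "\<psi>' (x \<oplus> y) = \<psi>' x + \<psi>' y"
  by (cases x; cases y) (simp add: \<psi>'_def)
lemma psi'_bscal: "\<psi>' (c \<cdot> x) = c * \<psi>' x"
  by (cases x) (simp add: \<psi>'_def algebra_simps)

lemma p_idem: "p \<star> p = p" and Q_p: "Q \<star> p = (0, 0)"
  by (simp_all add: q_idem)

lemma word_Cons: "as \<noteq> [] \<Longrightarrow> word (a # as) = (a, 0) \<star> (Q \<star> word as)"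
  by (cases as) auto

lemma fst_word:
  assumes "2 \<le> length as"
  shows "fst (word as) = 0"
proof -
  obtain a b bs where "as = a # b # bs"
    using assms by (cases as; cases "tl as") auto
  then show ?thesis by (cases "word (b # bs)") simp
qed

lemma word_append_mult: "word (as @ [x]) \<star> word (y # bs) = word (as @ x * y # bs)"
proof (induction as)
  case Nil
  show ?case
    by (cases bs) (simp_all add: word_Cons bprod_assoc[symmetric])
next
  case (Cons a as)
  then show ?case
    by (simp add: word_Cons bprod_assoc)
qed

lemma word_mult:
  "as \<noteq> [] \<Longrightarrow> bs \<noteq> [] \<Longrightarrow> word as \<star> word bs = word (butlast as @ last as * hd bs # tl bs)"
  using word_append_mult[of "butlast as" "last as" "hd bs" "tl bs"] by simp

fun word_value :: "'a list \<Rightarrow> complex" where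
  "word_value [] = 1"
| "word_value [a] = \<phi> a"
| "word_value (a # b # as) = \<phi> (a * last (b # as)) * prod_list (map \<phi> (butlast (b # as)))"

lemma fpow_q: "1 \<le> n \<Longrightarrow> fpow n q = q"
proof (induction n)
  case (Suc n)
  then show ?case using q_idem by (cases n) auto
qed simp

lemma psi'_word: "as \<noteq> [] \<Longrightarrow> \<psi>' (word as) = word_value as"
proof (cases as rule: word_value.cases)
  case (3 a b bs)
  define n where "n = length as - 1"
  have n: "n = Suc (length bs)" and len: "2 \<le> length as"
    using 3 by (simp_all add: n_def)
  have "\<Phi> (snd (word as)) = \<phi> (as ! 0 * as ! n) * (\<Prod>i\<in>{1..<n}. \<phi> (as ! i)) * \<Phi> (fpow n q)"
    using q_cai len unfolding cyc_antimon_indep_def n_def Let_def by blast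
  also have "\<Phi> (fpow n q) = 1"
    using n fpow_q q_norm by simp
  also have "as ! n = last (b # bs)"
    using 3 n by (simp add: last_conv_nth)
  also have "(\<Prod>i\<in>{1..<n}. \<phi> (as ! i)) = (\<Prod>i<length bs. \<phi> ((b # bs) ! i))"
    using 3 n prod.shift_bounds_Suc_ivl[of "\<lambda>i. \<phi> (as ! i)" 0 "length bs"]
    by (simp add: lessThan_atLeast0)
  also have "\<dots> = prod_list (map \<phi> (butlast (b # bs)))"
    unfolding prod_list_map_eq_prod_lessThan
    by (rule prod.cong) (auto simp: nth_butlast nth_Cons split: nat.split)
  finally show ?thesis
    using 3 fst_word[OF len] by (simp add: \<psi>'_def)
qed (auto simp: \<psi>'_def)

lemma word_value_Cons: "as \<noteq> [] \<Longrightarrow> word_value (a # as) = \<phi> (a * last as) * prod_list (map \<phi> (butlast as))"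
  by (cases as) auto

lemma word_value_collapse: "word_value (us @ a # m # b # vs) = \<phi> m * word_value (us @ a # b # vs)"
  by (cases us; cases vs) (auto simp: butlast_append word_value_Cons simp del: word_value.simps)

section \<open>Context equivalence\<close>

inductive_set word_span :: "('a \<times> 'f) set" where
  zero: "(0, 0) \<in> word_span"
| add_word: "x \<in> word_span \<Longrightarrow> as \<noteq> [] \<Longrightarrow> c \<cdot> word as \<oplus> x \<in> word_span"

lemma word_span_bplus: "x \<in> word_span \<Longrightarrow> y \<in> word_span \<Longrightarrow> x \<oplus> y \<in> word_span"
  by (induction x rule: word_span.induct) (auto simp: bplus_assoc intro: word_span.intros)

lemma word_span_bscal: "x \<in> word_span \<Longrightarrow> c \<cdot> x \<in> word_span"
  by (induction x rule: word_span.induct) (auto simp: bscal_bplus bscal_bscal intro: word_span.intros)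

lemma word_in_word_span: "as \<noteq> [] \<Longrightarrow> word as \<in> word_span"
  using word_span.add_word[OF word_span.zero, of as 1] by (cases "word as") simp

lemma word_span_word_bprod: "y \<in> word_span \<Longrightarrow> as \<noteq> [] \<Longrightarrow> word as \<star> y \<in> word_span"
  by (induction y rule: word_span.induct)
    (auto simp: bprod_bplus_right bprod_bscal_right word_mult intro!: word_span.intros)

lemma word_span_bprod: "x \<in> word_span \<Longrightarrow> y \<in> word_span \<Longrightarrow> x \<star> y \<in> word_span"
  by (induction x rule: word_span.induct)
    (auto simp: bprod_bplus_left bprod_bscal_left intro!: word_span_bplus word_span_bscal word_span_word_bprod word_span.zero)

lemma embed_in_word_span: "(a, 0) \<in> word_span"
  using word_in_word_span[of "[a]"] by simp

lemma Q_in_word_span: "Q \<in> word_span"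
  using word_in_word_span[of "[1, 1]"] by simp

lemma p_in_word_span: "p \<in> word_span"
proof -
  have "p = (1, 0) \<oplus> (- 1) \<cdot> Q"
    using module.scale_minus_left[OF module_sF, of 1 q] by simp
  then show ?thesis
    using word_span_bplus[OF embed_in_word_span word_span_bscal[OF Q_in_word_span]] by metis
qed

definition context_equiv :: "'a \<times> 'f \<Rightarrow> 'a \<times> 'f \<Rightarrow> bool" (infix "\<approx>" 50) where
  "x \<approx> y \<longleftrightarrow> (\<forall>L\<in>word_span. \<forall>R\<in>word_span. \<psi>' (L \<star> x \<star> R) = \<psi>' (L \<star> y \<star> R))"

lemma context_equivD: "x \<approx> y \<Longrightarrow> L \<in> word_span \<Longrightarrow> R \<in> word_span \<Longrightarrow> \<psi>' (L \<star> x \<star> R) = \<psi>' (L \<star> y \<star> R)"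
  unfolding context_equiv_def by blast

lemma context_equivI_words:
  assumes "\<And>as bs. as \<noteq> [] \<Longrightarrow> bs \<noteq> [] \<Longrightarrow> \<psi>' (word as \<star> x \<star> word bs) = \<psi>' (word as \<star> y \<star> word bs)"
  shows "x \<approx> y"
  unfolding context_equiv_def
proof (intro ballI)
  fix L R assume "L \<in> word_span" "R \<in> word_span"
  then show "\<psi>' (L \<star> x \<star> R) = \<psi>' (L \<star> y \<star> R)"
  proof (induction L rule: word_span.induct)
    case (add_word L as c)
    have "\<psi>' (word as \<star> x \<star> R) = \<psi>' (word as \<star> y \<star> R)"
      using \<open>R \<in> word_span\<close>
    proof (induction R rule: word_span.induct)
      case (add_word R bs d)
      then show ?case
        using assms[OF \<open>as \<noteq> []\<close> \<open>bs \<noteq> []\<close>] by (simp add: bprod_bplus_right bprod_bscal_right psi'_bplus psi'_bscal)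
    qed simp
    with add_word show ?case
      by (simp add: bprod_bplus_left bprod_bscal_left psi'_bplus psi'_bscal)
  qed simp
qed

lemma context_equiv_refl[simp]: "x \<approx> x"
  by (simp add: context_equiv_def)

lemma context_equiv_trans[trans]: "x \<approx> y \<Longrightarrow> y \<approx> z \<Longrightarrow> x \<approx> z"
  by (simp add: context_equiv_def)

lemma psi'_context_equiv: "x \<approx> y \<Longrightarrow> \<psi>' x = \<psi>' y"
  using context_equivD[OF _ embed_in_word_span embed_in_word_span, of x y 1 1] by simp

lemma context_equiv_bplus:
  assumes "x \<approx> x'" "y \<approx> y'"
  shows "x \<oplus> y \<approx> x' \<oplus> y'"
  unfolding context_equiv_def
proof (intro ballI)
  fix L R assume "L \<in> word_span" "R \<in> word_span"
  then show "\<psi>' (L \<star> (x \<oplus> y) \<star> R) = \<psi>' (L \<star> (x' \<oplus> y') \<star> R)"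
    using context_equivD[OF assms(1)] context_equivD[OF assms(2)]
    by (simp only: bprod_bplus_left bprod_bplus_right psi'_bplus)
qed

lemma context_equiv_bscal:
  assumes "x \<approx> y"
  shows "c \<cdot> x \<approx> c \<cdot> y"
  unfolding context_equiv_def
proof (intro ballI)
  fix L R assume "L \<in> word_span" "R \<in> word_span"
  then show "\<psi>' (L \<star> c \<cdot> x \<star> R) = \<psi>' (L \<star> c \<cdot> y \<star> R)"
    using context_equivD[OF assms]
    by (simp only: bprod_bscal_left bprod_bscal_right psi'_bscal)
qed

lemma context_equiv_bprod:
  assumes "x \<approx> x'" "y \<approx> y'" "x' \<in> word_span" "y \<in> word_span"
  shows "x \<star> y \<approx> x' \<star> y'"
  unfolding context_equiv_def
proof (intro ballI)
  fix L R assume L: "L \<in> word_span" and R: "R \<in> word_span"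
  have "\<psi>' (L \<star> (x \<star> y) \<star> R) = \<psi>' (L \<star> x \<star> (y \<star> R))"
    by (simp add: bprod_assoc)
  also have "\<dots> = \<psi>' (L \<star> x' \<star> (y \<star> R))"
    using context_equivD[OF assms(1) L word_span_bprod[OF assms(4) R]] .
  also have "\<dots> = \<psi>' ((L \<star> x') \<star> y \<star> R)"
    by (simp add: bprod_assoc)
  also have "\<dots> = \<psi>' ((L \<star> x') \<star> y' \<star> R)"
    using context_equivD[OF assms(2) word_span_bprod[OF L assms(3)] R] .
  finally show "\<psi>' (L \<star> (x \<star> y) \<star> R) = \<psi>' (L \<star> (x' \<star> y') \<star> R)"
    by (simp add: bprod_assoc)
qed

lemma context_equiv_sandwich:
  assumes "x \<approx> y" "A \<in> word_span" "B \<in> word_span"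
  shows "A \<star> x \<star> B \<approx> A \<star> y \<star> B"
  unfolding context_equiv_def
proof (intro ballI)
  fix L R assume "L \<in> word_span" "R \<in> word_span"
  then have "\<psi>' ((L \<star> A) \<star> x \<star> (B \<star> R)) = \<psi>' ((L \<star> A) \<star> y \<star> (B \<star> R))"
    using assms by (intro context_equivD) (auto intro: word_span_bprod)
  then show "\<psi>' (L \<star> (A \<star> x \<star> B) \<star> R) = \<psi>' (L \<star> (A \<star> y \<star> B) \<star> R)"
    by (simp add: bprod_assoc)
qed

lemma q_embed_q_collapse: "Q \<star> (m, 0) \<star> Q \<approx> \<phi> m \<cdot> Q"
proof (rule context_equivI_words)
  fix as bs :: "'a list" assume as: "as \<noteq> []" and bs: "bs \<noteq> []"
  have qmq: "Q \<star> (m, 0) \<star> Q = word [1, m, 1]" and q: "Q = word [1, 1]"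
    by simp_all
  have "\<psi>' (word as \<star> (Q \<star> (m, 0) \<star> Q) \<star> word bs) = \<psi>' (word (butlast as @ [last as, m, hd bs] @ tl bs))"
    unfolding qmq using as bs by (simp add: word_mult butlast_append del: qword.simps)
  also have "\<dots> = \<phi> m * \<psi>' (word (butlast as @ [last as, hd bs] @ tl bs))"
    by (simp add: psi'_word word_value_collapse del: qword.simps)
  also have "word (butlast as @ [last as, hd bs] @ tl bs) = word as \<star> Q \<star> word bs"
    unfolding q using as bs by (simp add: word_mult butlast_append del: qword.simps)
      (metis append.assoc append_Cons append_Nil append_butlast_last_id)
  finally show "\<psi>' (word as \<star> (Q \<star> (m, 0) \<star> Q) \<star> word bs) = \<psi>' (word as \<star> \<phi> m \<cdot> Q \<star> word bs)"
    by (simp only: bprod_bscal_left bprod_bscal_right psi'_bscal)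
qed

section \<open>Normal form of the corner elements\<close>

inductive_set q_span :: "'a set \<Rightarrow> ('a \<times> 'f) set" for S where
  zero: "(0, 0) \<in> q_span S"
| add_word: "b \<in> S \<Longrightarrow> e \<in> S \<Longrightarrow> r \<in> q_span S \<Longrightarrow> c \<cdot> word [b, e] \<oplus> r \<in> q_span S"

lemma q_span_subset_word_span: "r \<in> q_span S \<Longrightarrow> r \<in> word_span"
  by (induction r rule: q_span.induct) (auto intro: word_span.intros simp del: qword.simps)

lemma q_span_bplus: "r \<in> q_span S \<Longrightarrow> r' \<in> q_span S \<Longrightarrow> r \<oplus> r' \<in> q_span S"
  by (induction r rule: q_span.induct) (auto simp: bplus_assoc intro: q_span.intros simp del: qword.simps)

lemma q_span_bscal: "r \<in> q_span S \<Longrightarrow> c \<cdot> r \<in> q_span S"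
  by (induction r rule: q_span.induct)
    (auto simp: bscal_bplus bscal_bscal intro: q_span.intros simp del: qword.simps)

lemma word2_in_q_span: "b \<in> S \<Longrightarrow> e \<in> S \<Longrightarrow> word [b, e] \<in> q_span S"
  using q_span.add_word[OF _ _ q_span.zero, of b S e 1] by (cases "word [b, e]") simp

lemma q_span_embed_bprod:
  assumes S: "unital_subalg sA S" and y: "y \<in> S" and r: "r \<in> q_span S"
  shows "(y, 0) \<star> r \<in> q_span S" and "r \<star> (y, 0) \<in> q_span S"
proof -
  have closed: "y * b \<in> S" "b * y \<in> S" if "b \<in> S" for b
    using S y that by (auto intro: unital_subalgD(3))
  have left: "(y, 0) \<star> word [b, e] = word [y * b, e]" and right: "word [b, e] \<star> (y, 0) = word [b, e * y]"
    for b e by simp_all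
  show "(y, 0) \<star> r \<in> q_span S"
    using r by (induction r rule: q_span.induct)
      (auto simp: bprod_bplus_right bprod_bscal_right left closed intro!: q_span.intros simp del: qword.simps)
  show "r \<star> (y, 0) \<in> q_span S"
    using r by (induction r rule: q_span.induct)
      (auto simp: bprod_bplus_left bprod_bscal_left right closed intro!: q_span.intros simp del: qword.simps)
qed

lemma word2_bprod_word2: "word [b, e] \<star> word [b', e'] \<approx> \<phi> (e * b') \<cdot> word [b, e']"
proof -
  have "word [b, e] \<star> word [b', e'] = (b, 0) \<star> (Q \<star> (e * b', 0) \<star> Q) \<star> (e', 0)"
    and "\<phi> (e * b') \<cdot> word [b, e'] = (b, 0) \<star> \<phi> (e * b') \<cdot> Q \<star> (e', 0)"
    by simp_all
  then show ?thesis
    using context_equiv_sandwich[OF q_embed_q_collapse embed_in_word_span embed_in_word_span] by metis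
qed

lemma q_span_bprod:
  assumes "r1 \<in> q_span S" and "r2 \<in> q_span S"
  shows "\<exists>r\<in>q_span S. r1 \<star> r2 \<approx> r"
proof -
  have word_bprod: "\<exists>r\<in>q_span S. word [b, e] \<star> r2 \<approx> r" if "b \<in> S" for b e
    using assms(2)
  proof (induction r2 rule: q_span.induct)
    case zero
    show ?case by (intro bexI[OF _ q_span.zero]) simp
  next
    case (add_word b' e' r2 c)
    then obtain r where r: "r \<in> q_span S" "word [b, e] \<star> r2 \<approx> r" by blast
    have "word [b, e] \<star> (c \<cdot> word [b', e'] \<oplus> r2) \<approx> c \<cdot> (\<phi> (e * b') \<cdot> word [b, e']) \<oplus> r"
      unfolding bprod_bplus_right bprod_bscal_right
      by (intro context_equiv_bplus context_equiv_bscal word2_bprod_word2 r)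
    moreover have "c \<cdot> (\<phi> (e * b') \<cdot> word [b, e']) \<oplus> r \<in> q_span S"
      using add_word r that by (simp add: bscal_bscal q_span.add_word del: qword.simps)
    ultimately show ?case by blast
  qed
  show ?thesis
    using assms(1)
  proof (induction r1 rule: q_span.induct)
    case zero
    show ?case by (intro bexI[OF _ q_span.zero]) simp
  next
    case (add_word b e r1 c)
    then obtain r r' where "r \<in> q_span S" "r1 \<star> r2 \<approx> r" "r' \<in> q_span S" "word [b, e] \<star> r2 \<approx> r'"
      using word_bprod by blast
    then show ?case
      unfolding bprod_bplus_left bprod_bscal_left
      by (intro bexI[of _ "c \<cdot> r' \<oplus> r"] context_equiv_bplus context_equiv_bscal q_span_bplus q_span_bscal)
  qed
qed

definition corner_form :: "'a set \<Rightarrow> 'a \<times> 'f \<Rightarrow> bool" where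
  "corner_form S c \<longleftrightarrow> c \<in> word_span \<and> p \<star> c = c \<and> c \<star> p = c \<and> fst c \<in> S \<and>
     (\<exists>r\<in>q_span S. c \<approx> (fst c, 0) \<oplus> r)"

lemma corner_formI:
  assumes "c \<in> word_span" "p \<star> c = c" "c \<star> p = c" "fst c = y" "y \<in> S"
    and "r \<in> q_span S" "c \<approx> (y, 0) \<oplus> r"
  shows "corner_form S c"
  using assms unfolding corner_form_def by blast

lemma corner_form_p:
  assumes "unital_subalg sA S"
  shows "corner_form S p"
proof -
  have "1 \<in> S"
    using assms by (rule unital_subalgD(1))
  then have r: "word [- 1, 1] \<in> q_span S"
    using assms by (intro word2_in_q_span unital_subalg_uminus)
  have equiv: "p \<approx> (1, 0) \<oplus> word [- 1, 1]"
    unfolding context_equiv_def by simp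
  show ?thesis
    by (rule corner_formI[OF p_in_word_span p_idem p_idem _ \<open>1 \<in> S\<close> r equiv]) simp
qed

lemma corner_form_generator:
  assumes S: "unital_subalg sA S" and a: "a \<in> S"
  shows "corner_form S (p \<star> (a, 0) \<star> p)"
proof -
  have S_closed: "1 \<in> S" "- 1 \<in> S" "- a \<in> S"
    using S a by (auto intro: unital_subalgD(1) unital_subalg_uminus)
  define r where "r = word [-1, a] \<oplus> word [-a, 1] \<oplus> \<phi> a \<cdot> Q"
  have "Q \<in> q_span S"
    using word2_in_q_span[of 1 S 1] S_closed by simp
  then have r: "r \<in> q_span S"
    unfolding r_def using S_closed a by (intro q_span_bplus q_span_bscal word2_in_q_span)
  have "p \<star> (a, 0) \<star> p = (a, 0) \<oplus> (word [-1, a] \<oplus> word [-a, 1] \<oplus> Q \<star> (a, 0) \<star> Q)"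
    by (simp add: q_idem algebra_simps)
  then have equiv: "p \<star> (a, 0) \<star> p \<approx> (a, 0) \<oplus> r"
    unfolding r_def by (simp only:) (intro context_equiv_bplus context_equiv_refl q_embed_q_collapse)
  have ws: "p \<star> (a, 0) \<star> p \<in> word_span"
    by (intro word_span_bprod p_in_word_span embed_in_word_span)
  have left: "p \<star> (p \<star> (a, 0) \<star> p) = p \<star> (a, 0) \<star> p"
    by (simp only: p_idem flip: bprod_assoc)
  have right: "p \<star> (a, 0) \<star> p \<star> p = p \<star> (a, 0) \<star> p"
    by (simp only: bprod_assoc p_idem)
  have fst: "fst (p \<star> (a, 0) \<star> p) = a"
    by simp
  show ?thesis
    by (rule corner_formI[OF ws left right fst a r equiv])
qed

lemma corner_formE:
  assumes "corner_form S c"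
  obtains r where "c \<in> word_span" "p \<star> c = c" "c \<star> p = c" "fst c \<in> S"
    "r \<in> q_span S" "c \<approx> (fst c, 0) \<oplus> r"
  using assms unfolding corner_form_def by blast

lemma corner_form_bplus:
  assumes S: "unital_subalg sA S" and c: "corner_form S c" and d: "corner_form S d"
  shows "corner_form S (c \<oplus> d)"
proof -
  obtain r1 r2 where c': "c \<in> word_span" "p \<star> c = c" "c \<star> p = c" "fst c \<in> S" "r1 \<in> q_span S"
      "c \<approx> (fst c, 0) \<oplus> r1"
    and d': "d \<in> word_span" "p \<star> d = d" "d \<star> p = d" "fst d \<in> S" "r2 \<in> q_span S"
      "d \<approx> (fst d, 0) \<oplus> r2"
    using c d by (elim corner_formE)
  have "c \<oplus> d \<approx> ((fst c, 0) \<oplus> r1) \<oplus> ((fst d, 0) \<oplus> r2)"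
    using c'(6) d'(6) by (rule context_equiv_bplus)
  also have "\<dots> = (fst c + fst d, 0) \<oplus> (r1 \<oplus> r2)"
    by (cases r1; cases r2) (simp add: algebra_simps)
  finally have equiv: "c \<oplus> d \<approx> (fst c + fst d, 0) \<oplus> (r1 \<oplus> r2)" .
  have "p \<star> (c \<oplus> d) = c \<oplus> d" "(c \<oplus> d) \<star> p = c \<oplus> d"
    using c' d' by (simp_all only: bprod_bplus_left bprod_bplus_right)
  then show ?thesis
    using S c' d'
    by (intro corner_formI[OF _ _ _ _ _ _ equiv] word_span_bplus q_span_bplus unital_subalgD(2)[OF S])
      simp_all
qed

lemma corner_form_bscal:
  assumes S: "unital_subalg sA S" and c: "corner_form S c"
  shows "corner_form S (k \<cdot> c)"
proof -
  obtain r where c': "c \<in> word_span" "p \<star> c = c" "c \<star> p = c" "fst c \<in> S" "r \<in> q_span S"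
      "c \<approx> (fst c, 0) \<oplus> r"
    using c by (elim corner_formE)
  have "k \<cdot> c \<approx> k \<cdot> ((fst c, 0) \<oplus> r)"
    using c'(6) by (rule context_equiv_bscal)
  also have "\<dots> = (sA k (fst c), 0) \<oplus> k \<cdot> r"
    by (cases r) simp
  finally have equiv: "k \<cdot> c \<approx> (sA k (fst c), 0) \<oplus> k \<cdot> r" .
  have "p \<star> k \<cdot> c = k \<cdot> c" "k \<cdot> c \<star> p = k \<cdot> c"
    using c' by (simp_all only: bprod_bscal_left bprod_bscal_right)
  then show ?thesis
    using S c'
    by (intro corner_formI[OF _ _ _ _ _ _ equiv] word_span_bscal q_span_bscal unital_subalgD(4)[OF S])
      simp_all
qed

lemma corner_form_bprod:
  assumes S: "unital_subalg sA S" and c: "corner_form S c" and d: "corner_form S d"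
  shows "corner_form S (c \<star> d)"
proof -
  obtain r1 r2 where c': "c \<in> word_span" "p \<star> c = c" "c \<star> p = c" "fst c \<in> S" "r1 \<in> q_span S"
      "c \<approx> (fst c, 0) \<oplus> r1"
    and d': "d \<in> word_span" "p \<star> d = d" "d \<star> p = d" "fst d \<in> S" "r2 \<in> q_span S"
      "d \<approx> (fst d, 0) \<oplus> r2"
    using c d by (elim corner_formE)
  obtain r12 where r12: "r12 \<in> q_span S" "r1 \<star> r2 \<approx> r12"
    using q_span_bprod[OF c'(5) d'(5)] by blast
  define r where "r = (fst c, 0) \<star> r2 \<oplus> r1 \<star> (fst d, 0) \<oplus> r12"
  have "(fst c, 0) \<oplus> r1 \<in> word_span"
    using c'(5) by (intro word_span_bplus embed_in_word_span q_span_subset_word_span)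
  then have "c \<star> d \<approx> ((fst c, 0) \<oplus> r1) \<star> ((fst d, 0) \<oplus> r2)"
    using context_equiv_bprod[OF c'(6) d'(6) _ d'(1)] by blast
  also have "\<dots> = (fst c * fst d, 0) \<oplus> ((fst c, 0) \<star> r2 \<oplus> r1 \<star> (fst d, 0) \<oplus> r1 \<star> r2)"
    by (cases r1; cases r2) (simp add: algebra_simps)
  also have "\<dots> \<approx> (fst c * fst d, 0) \<oplus> r"
    unfolding r_def using r12(2) by (intro context_equiv_bplus context_equiv_refl)
  finally have equiv: "c \<star> d \<approx> (fst c * fst d, 0) \<oplus> r" .
  have "r \<in> q_span S"
    unfolding r_def using S c'(4,5) d'(4,5) r12(1) by (intro q_span_bplus q_span_embed_bprod)
  moreover have "p \<star> (c \<star> d) = c \<star> d" "c \<star> d \<star> p = c \<star> d"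
    using c'(2) d'(3) by (simp_all add: bprod_assoc flip: bprod_assoc[of p])
  ultimately show ?thesis
    using S c' d'
    by (intro corner_formI[OF _ _ _ _ _ _ equiv] word_span_bprod unital_subalgD(3)[OF S]) simp_all
qed

lemma corner_form_gen_alg:
  assumes S: "unital_subalg sA S"
    and c: "c \<in> gen_alg bplus (bscale sA sF) (bmult lm rm) p {p \<star> (a, 0) \<star> p | a. a \<in> S}"
  shows "corner_form S c"
  using c
proof (induction c rule: gen_alg.induct)
  case (gen c)
  then obtain a where "c = p \<star> (a, 0) \<star> p" "a \<in> S"
    by blast
  then show ?case
    using corner_form_generator[OF S] by (simp only:)
qed (auto intro: corner_form_p corner_form_bplus corner_form_bscal corner_form_bprod S)

lemma Q_bprod_corner: "corner_form S c \<Longrightarrow> Q \<star> c = (0, 0)"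
  by (metis Q_p bprod_assoc bprod_zero_left corner_formE)

lemma psi'_corner_q_part:
  assumes c: "corner_form S c" and equiv: "c \<approx> (fst c, 0) \<oplus> r"
  shows "\<psi>' r - \<psi>' (Q \<star> r \<star> Q) = \<psi>' c"
proof -
  have c_value: "\<psi>' c = \<phi> (fst c) + \<psi>' r"
    using psi'_context_equiv[OF equiv] by (simp add: psi'_bplus)
  have "Q \<star> (fst c, 0) \<star> Q = word [1, fst c, 1]"
    by simp
  then have qyq: "\<psi>' (Q \<star> (fst c, 0) \<star> Q) = \<phi> (fst c)"
    by (simp add: psi'_word del: qword.simps)
  have "0 = \<psi>' (Q \<star> c \<star> Q)"
    using Q_bprod_corner[OF c] by simp
  also have "\<dots> = \<psi>' (Q \<star> (fst c, 0) \<star> Q) + \<psi>' (Q \<star> r \<star> Q)"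
    using context_equivD[OF equiv Q_in_word_span Q_in_word_span]
    by (simp add: bprod_bplus_left bprod_bplus_right psi'_bplus)
  finally show ?thesis
    using c_value qyq by (simp add: algebra_simps)
qed

lemma psi'_q_span_after_q:
  assumes r: "r \<in> q_span S" and killed: "\<forall>b\<in>S. \<phi> (P * b) = 0"
    and L: "L \<in> word_span" and R: "R \<in> word_span"
  shows "\<psi>' (L \<star> Q \<star> (P, 0) \<star> r \<star> R) = 0"
  using r
proof (induction r rule: q_span.induct)
  case (add_word b e r c)
  have "Q \<star> (P, 0) \<star> word [b, e] = Q \<star> (P * b, 0) \<star> Q \<star> (e, 0)"
    by simp
  then have "\<psi>' (L \<star> Q \<star> (P, 0) \<star> word [b, e] \<star> R) = \<psi>' (L \<star> (Q \<star> (P * b, 0) \<star> Q) \<star> ((e, 0) \<star> R))"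
    by (simp only: bprod_assoc)
  also have "\<dots> = \<psi>' (L \<star> \<phi> (P * b) \<cdot> Q \<star> ((e, 0) \<star> R))"
    using L R by (intro context_equivD q_embed_q_collapse word_span_bprod embed_in_word_span)
  also have "\<dots> = 0"
    using killed add_word.hyps(1) by (simp add: bprod_bscal_left bprod_bscal_right psi'_bscal)
  finally show ?case
    using add_word.IH
    by (simp add: bprod_bplus_left bprod_bplus_right bprod_bscal_left bprod_bscal_right psi'_bplus psi'_bscal
        del: qword.simps)
qed simp

end

section \<open>Products of centered alternating corner elements\<close>

locale typeB'_free = typeB'_space sA \<phi> sF lm rm \<Phi> q + free_subalgebras sA \<phi> I A
  for sA :: "complex \<Rightarrow> 'a::ring_1 \<Rightarrow> 'a" and \<phi> :: "'a \<Rightarrow> complex"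
    and sF :: "complex \<Rightarrow> 'f::ring \<Rightarrow> 'f"
    and lm :: "'a \<Rightarrow> 'f \<Rightarrow> 'f" and rm :: "'f \<Rightarrow> 'a \<Rightarrow> 'f"
    and \<Phi> :: "'f \<Rightarrow> complex" and q :: 'f
    and I :: "'i set" and A :: "'i \<Rightarrow> 'a set"
begin

definition heads :: "('i \<times> 'a \<times> 'f) list \<Rightarrow> ('i \<times> 'a) list" where
  "heads ics = map (\<lambda>(i, c). (i, fst c)) ics"

text \<open>The trailing p is the unit of the corner algebra p B p, as in mprod.\<close>
definition chain :: "('i \<times> 'a \<times> 'f) list \<Rightarrow> 'a \<times> 'f" where
  "chain ics = foldr (\<star>) (map snd ics) p"

definition corner_chain :: "('i \<times> 'a \<times> 'f) list \<Rightarrow> bool" where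
  "corner_chain ics \<longleftrightarrow> (\<forall>(i, c)\<in>set ics. corner_form (A i) c)"

lemma heads_simps[simp]: "heads [] = []" "heads ((i, c) # ics) = (i, fst c) # heads ics"
  by (simp_all add: heads_def)

lemma map_fst_heads[simp]: "map fst (heads ics) = map fst ics"
  and length_heads[simp]: "length (heads ics) = length ics"
  by (induction ics) auto

lemma nth_heads: "k < length ics \<Longrightarrow> heads ics ! k = (fst (ics ! k), fst (snd (ics ! k)))"
  by (simp add: heads_def case_prod_beta)

lemma chain_simps[simp]: "chain [] = p" "chain ((i, c) # ics) = c \<star> chain ics"
  by (simp_all add: chain_def)

lemma corner_chain_simps[simp]:
  "corner_chain []" "corner_chain ((i, c) # ics) \<longleftrightarrow> corner_form (A i) c \<and> corner_chain ics"
  by (simp_all add: corner_chain_def)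

lemma fst_chain: "fst (chain ics) = prods (heads ics)"
  by (induction ics) auto

lemma chain_in_word_span: "corner_chain ics \<Longrightarrow> chain ics \<in> word_span"
proof (induction ics)
  case (Cons ic ics)
  then show ?case
    by (cases ic) (auto intro: word_span_bprod elim: corner_formE)
qed (simp add: p_in_word_span)

lemma Q_bprod_chain:
  assumes "corner_chain ics"
  shows "Q \<star> chain ics = (0, 0)"
proof (cases ics)
  case Nil
  then show ?thesis by (simp add: q_idem)
next
  case (Cons ic ics')
  obtain i c where "ic = (i, c)" by (cases ic) blast
  then have "Q \<star> c = (0, 0)"
    using assms Cons by (auto intro: Q_bprod_corner)
  then show ?thesis
    using Cons \<open>ic = (i, c)\<close> by (simp add: bprod_assoc[symmetric])
qed

lemma corner_chain_ConsE:
  assumes "corner_chain ((i, c) # ics)"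
  obtains r where "corner_form (A i) c" "corner_chain ics" "r \<in> q_span (A i)" "c \<approx> (fst c, 0) \<oplus> r"
proof -
  have c: "corner_form (A i) c" and "corner_chain ics"
    using assms by simp_all
  moreover obtain r where "r \<in> q_span (A i)" "c \<approx> (fst c, 0) \<oplus> r"
    using c by (elim corner_formE)
  ultimately show thesis
    using that by blast
qed

lemma psi'_q_prefix_chain:
  assumes "centered_alternating (pre @ heads ics)" "pre \<noteq> []" "corner_chain ics"
  shows "\<psi>' ((z, 0) \<star> Q \<star> (prods pre, 0) \<star> chain ics) = \<phi> (z * prods pre * prods (heads ics))"
  using assms
proof (induction ics arbitrary: pre)
  case Nil
  then have "\<phi> (prods pre) = 0"
    by (intro phi_prods_centered_alternating) simp_all
  moreover have "(z, 0) \<star> Q \<star> (prods pre, 0) = word [z, prods pre]"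
    and "(z, 0) \<star> Q \<star> (prods pre, 0) \<star> Q = word [z, prods pre, 1]"
    by simp_all
  ultimately show ?case
    by (simp add: psi'_bprod_p psi'_word del: qword.simps)
next
  case (Cons ic ics)
  obtain i c where ic: "ic = (i, c)" by (cases ic) blast
  obtain r where c: "corner_form (A i) c" "corner_chain ics" "r \<in> q_span (A i)" "c \<approx> (fst c, 0) \<oplus> r"
    using Cons.prems(3) unfolding ic by (elim corner_chain_ConsE)
  define L where "L = (z, 0) \<star> Q \<star> (prods pre, 0)"
  have L: "L \<in> word_span"
    unfolding L_def by (intro word_span_bprod embed_in_word_span Q_in_word_span)
  have alt: "centered_alternating ((pre @ [(i, fst c)]) @ heads ics)"
    using Cons.prems(1) ic by simp
  have "L \<star> (fst c, 0) = (z, 0) \<star> Q \<star> (prods (pre @ [(i, fst c)]), 0)"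
    unfolding L_def by (simp add: bprod_assoc)
  then have first: "\<psi>' (L \<star> (fst c, 0) \<star> chain ics) = \<phi> (z * prods (pre @ [(i, fst c)]) * prods (heads ics))"
    using Cons.IH[OF alt _ c(2)] by simp
  have second: "\<psi>' (L \<star> r \<star> chain ics) = 0"
    unfolding L_def using Cons.prems(1,2) ic
    by (intro psi'_q_span_after_q[OF c(3)] embed_in_word_span chain_in_word_span[OF c(2)] ballI
        phi_prods_mult_eq_0[of pre i "fst c" "heads ics"]) simp_all
  have "\<psi>' (L \<star> chain (ic # ics)) = \<psi>' (L \<star> c \<star> chain ics)"
    using ic by (simp only: chain_simps bprod_assoc)
  also have "\<dots> = \<psi>' (L \<star> ((fst c, 0) \<oplus> r) \<star> chain ics)"
    by (rule context_equivD[OF c(4) L chain_in_word_span[OF c(2)]])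
  also have "\<dots> = \<psi>' (L \<star> (fst c, 0) \<star> chain ics) + \<psi>' (L \<star> r \<star> chain ics)"
    by (simp only: bprod_bplus_left bprod_bplus_right psi'_bplus)
  finally show ?case
    unfolding L_def[symmetric] using first second ic by (simp add: mult.assoc)
qed

lemma psi'_prefix_word2_chain:
  assumes alt: "centered_alternating (pre @ (i, y) # heads ics)" and chain: "corner_chain ics"
    and b: "b \<in> A i" and e: "e \<in> A i"
  shows "\<psi>' ((prods pre, 0) \<star> word [b, e] \<star> chain ics) =
    \<phi> (b * center e) * \<phi> (prods pre * prods (heads ics))"
proof -
  have i: "i \<in> I" and ics: "centered_alternating (heads ics)" and pre: "centered_alternating pre"
    and first: "heads ics \<noteq> [] \<Longrightarrow> fst (hd (heads ics)) \<noteq> i" and last: "pre \<noteq> [] \<Longrightarrow> fst (last pre) \<noteq> i"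
    using alt by (auto simp: centered_alternating_append centered_alternating_Cons)
  have ce: "center e \<in> A i" and bce: "b * center e \<in> A i"
    using subalg i b e center_mem mult_mem by auto
  have "(prods pre, 0) \<star> word [b, e] =
      (prods pre * b, 0) \<star> Q \<star> (prods [(i, center e)], 0) \<oplus> \<phi> e \<cdot> ((prods pre * b, 0) \<star> Q)"
    by (simp add: center_def)
  then have "\<psi>' ((prods pre, 0) \<star> word [b, e] \<star> chain ics) =
      \<psi>' ((prods pre * b, 0) \<star> Q \<star> (prods [(i, center e)], 0) \<star> chain ics)
      + \<phi> e * \<psi>' ((prods pre * b, 0) \<star> (Q \<star> chain ics))"
    by (simp only: bprod_bplus_left bprod_bscal_left psi'_bplus psi'_bscal bprod_assoc)
  also have "\<psi>' ((prods pre * b, 0) \<star> Q \<star> (prods [(i, center e)], 0) \<star> chain ics) =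
      \<phi> (prods pre * (b * center e) * prods (heads ics))"
    using ics first i ce chain
    by (subst psi'_q_prefix_chain) (auto simp: centered_alternating_Cons mult.assoc)
  also have "\<dots> = \<phi> (b * center e) * \<phi> (prods pre * prods (heads ics))"
    using pre ics i bce last first by (intro phi_insert_factor) auto
  finally show ?thesis
    using Q_bprod_chain[OF chain] by simp
qed

lemma psi'_prefix_q_span_chain:
  assumes alt: "centered_alternating (pre @ (i, y) # heads ics)" and chain: "corner_chain ics"
    and r: "r \<in> q_span (A i)"
  shows "\<psi>' ((prods pre, 0) \<star> r \<star> chain ics) = (\<psi>' r - \<psi>' (Q \<star> r \<star> Q)) * \<phi> (prods pre * prods (heads ics))"
  using r
proof (induction r rule: q_span.induct)
  case (add_word b e r c)
  have "Q \<star> word [b, e] \<star> Q = word [1, b, e, 1]"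
    by (simp add: mult.assoc)
  then have "\<psi>' (word [b, e]) - \<psi>' (Q \<star> word [b, e] \<star> Q) = \<phi> (b * center e)"
    by (simp add: psi'_word center_def right_diff_distrib del: qword.simps)
  then have word: "\<psi>' ((prods pre, 0) \<star> word [b, e] \<star> chain ics) =
      (\<psi>' (word [b, e]) - \<psi>' (Q \<star> word [b, e] \<star> Q)) * \<phi> (prods pre * prods (heads ics))"
    using psi'_prefix_word2_chain[OF alt chain add_word.hyps(1,2)] by simp
  have "\<psi>' ((prods pre, 0) \<star> (c \<cdot> word [b, e] \<oplus> r) \<star> chain ics) =
      c * \<psi>' ((prods pre, 0) \<star> word [b, e] \<star> chain ics) + \<psi>' ((prods pre, 0) \<star> r \<star> chain ics)"
    by (simp only: bprod_bplus_left bprod_bplus_right bprod_bscal_left bprod_bscal_right psi'_bplus psi'_bscal)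
  also have "\<dots> = (c * (\<psi>' (word [b, e]) - \<psi>' (Q \<star> word [b, e] \<star> Q)) + (\<psi>' r - \<psi>' (Q \<star> r \<star> Q))) *
      \<phi> (prods pre * prods (heads ics))"
    unfolding word add_word.IH by (simp add: algebra_simps)
  finally show ?case
    by (simp add: bprod_bplus_left bprod_bplus_right bprod_bscal_left bprod_bscal_right psi'_bplus psi'_bscal
        algebra_simps del: qword.simps)
qed simp

lemma psi'_prefix_chain:
  assumes "centered_alternating (pre @ heads ics)" "corner_chain ics"
  shows "\<psi>' ((prods pre, 0) \<star> chain ics) =
    (\<Sum>k<length ics. \<psi>' (snd (ics ! k)) *
       \<phi> (prods pre * prods (take k (heads ics)) * prods (drop (Suc k) (heads ics))))"
  using assms
proof (induction ics arbitrary: pre)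
  case Nil
  have "(prods pre, 0) \<star> Q = word [prods pre, 1]"
    by simp
  then show ?case
    by (simp add: psi'_bprod_p psi'_word del: qword.simps bprod_pair)
next
  case (Cons ic ics)
  obtain i c where ic: "ic = (i, c)" by (cases ic) blast
  obtain r where c: "corner_form (A i) c" "corner_chain ics" "r \<in> q_span (A i)" "c \<approx> (fst c, 0) \<oplus> r"
    using Cons.prems(2) unfolding ic by (elim corner_chain_ConsE)
  have alt: "centered_alternating ((pre @ [(i, fst c)]) @ heads ics)"
    using Cons.prems(1) ic by simp
  have "\<psi>' ((prods pre, 0) \<star> chain (ic # ics)) = \<psi>' ((prods pre, 0) \<star> c \<star> chain ics)"
    using ic by (simp only: chain_simps bprod_assoc)
  also have "\<dots> = \<psi>' ((prods pre, 0) \<star> ((fst c, 0) \<oplus> r) \<star> chain ics)"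
    by (rule context_equivD[OF c(4) embed_in_word_span chain_in_word_span[OF c(2)]])
  also have "\<dots> = \<psi>' ((prods pre, 0) \<star> (fst c, 0) \<star> chain ics) + \<psi>' ((prods pre, 0) \<star> r \<star> chain ics)"
    by (simp only: bprod_bplus_left bprod_bplus_right psi'_bplus)
  also have "\<psi>' ((prods pre, 0) \<star> (fst c, 0) \<star> chain ics) =
      (\<Sum>k<length ics. \<psi>' (snd (ics ! k)) *
         \<phi> (prods pre * fst c * prods (take k (heads ics)) * prods (drop (Suc k) (heads ics))))"
    using Cons.IH[OF alt c(2)] by simp
  also have "\<psi>' ((prods pre, 0) \<star> r \<star> chain ics) = \<psi>' c * \<phi> (prods pre * prods (heads ics))"
    using psi'_prefix_q_span_chain[of pre i "fst c" ics r] psi'_corner_q_part[OF c(1) c(4)]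
      Cons.prems(1) ic c(2,3) by simp
  finally show ?case
    using ic by (simp add: sum.lessThan_Suc_shift mult.assoc del: sum.lessThan_Suc)
qed

lemma corner_chain_zip:
  assumes "length cs = length js" "\<And>k. k < length js \<Longrightarrow> corner_form (A (js ! k)) (cs ! k)"
  shows "corner_chain (zip js cs)"
  unfolding corner_chain_def
proof
  fix ic assume "ic \<in> set (zip js cs)"
  then obtain k where "k < length js" "ic = (js ! k, cs ! k)"
    using assms(1) by (auto simp: in_set_conv_nth)
  then show "case ic of (i, c) \<Rightarrow> corner_form (A i) c"
    using assms(2) by simp
qed

lemma centered_alternating_heads_zip:
  assumes len: "length cs = length js" and alt: "successively (\<noteq>) js"
    and cs: "\<And>k. k < length js \<Longrightarrow> js ! k \<in> I \<and> fst (cs ! k) \<in> A (js ! k) \<and> \<phi> (fst (cs ! k)) = 0"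
  shows "centered_alternating (heads (zip js cs))"
  unfolding centered_alternating_def
proof
  show "successively (\<lambda>x y. fst x \<noteq> fst y) (heads (zip js cs))"
    using len alt successively_map[of "(\<noteq>)" fst "heads (zip js cs)"] by simp
  show "\<forall>(i, x)\<in>set (heads (zip js cs)). i \<in> I \<and> x \<in> A i \<and> \<phi> x = 0"
  proof
    fix ix assume "ix \<in> set (heads (zip js cs))"
    then obtain k where "k < length js" "ix = (js ! k, fst (cs ! k))"
      using len by (auto simp: in_set_conv_nth nth_heads)
    then show "case ix of (i, x) \<Rightarrow> i \<in> I \<and> x \<in> A i \<and> \<phi> x = 0"
      using cs by simp
  qed
qed

lemma psi'_chain_zip:
  assumes len: "length cs = length js" and ne: "js \<noteq> []"
    and alt: "centered_alternating (heads (zip js cs))" and chain: "corner_chain (zip js cs)"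
  shows "\<psi>' (chain (zip js cs)) = (if odd (length cs) \<and> rev js = js
    then (\<Prod>k<length cs div 2. \<phi> (fst (cs ! k) * fst (cs ! (length cs - 1 - k)))) * \<psi>' (cs ! (length cs div 2))
    else 0)"
proof -
  let ?n = "length cs" and ?zs = "heads (zip js cs)"
  have "\<psi>' (chain (zip js cs)) = (\<Sum>k<?n. \<psi>' (snd (zip js cs ! k)) *
      \<phi> (prods (take k ?zs) * prods (drop (Suc k) ?zs)))"
    using psi'_prefix_chain[of "[]" "zip js cs"] alt chain len by simp
  also have "\<dots> = (if odd ?n \<and> rev js = js
      then (\<Prod>k<?n div 2. \<phi> (snd (?zs ! k) * snd (?zs ! (?n - 1 - k)))) * \<psi>' (snd (zip js cs ! (?n div 2)))
      else 0)"
    using sum_phi_prods_omit_one[OF alt, of "\<lambda>k. \<psi>' (snd (zip js cs ! k))"] len by simp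
  also have "(\<Prod>k<?n div 2. \<phi> (snd (?zs ! k) * snd (?zs ! (?n - 1 - k)))) =
      (\<Prod>k<?n div 2. \<phi> (fst (cs ! k) * fst (cs ! (?n - 1 - k))))"
    using len by (intro prod.cong) (auto simp: nth_heads)
  also have "snd (zip js cs ! (?n div 2)) = cs ! (?n div 2)"
    using len ne by simp
  finally show ?thesis .
qed

lemma inf_free_corner_subalgebras:
  "inf_free (bmult lm rm) p (\<lambda>x. \<phi> (fst x)) \<psi>' I
     (\<lambda>i. gen_alg bplus (bscale sA sF) (bmult lm rm) p {p \<star> (a, 0) \<star> p | a. a \<in> A i})"
  unfolding inf_free_def
proof (intro allI impI)
  fix js :: "'i list" and cs :: "('a \<times> 'f) list"
  assume "js \<noteq> [] \<and> length cs = length js \<and> set js \<subseteq> I \<and> successively (\<noteq>) js \<and>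
    (\<forall>k<length js. cs ! k \<in> gen_alg bplus (bscale sA sF) (bmult lm rm) p {p \<star> (a, 0) \<star> p | a. a \<in> A (js ! k)} \<and>
       \<phi> (fst (cs ! k)) = 0)"
  then have ne: "js \<noteq> []" and len: "length cs = length js" and alt: "successively (\<noteq>) js"
    and index: "\<And>k. k < length js \<Longrightarrow> js ! k \<in> I"
    and mem: "\<And>k. k < length js \<Longrightarrow>
      cs ! k \<in> gen_alg bplus (bscale sA sF) (bmult lm rm) p {p \<star> (a, 0) \<star> p | a. a \<in> A (js ! k)}"
    and centered: "\<And>k. k < length js \<Longrightarrow> \<phi> (fst (cs ! k)) = 0"
    by (blast dest: nth_mem)+
  have corner: "corner_form (A (js ! k)) (cs ! k)" if "k < length js" for k
    using subalg index[OF that] mem[OF that] by (intro corner_form_gen_alg) auto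
  have chain: "corner_chain (zip js cs)"
    using len corner by (rule corner_chain_zip)
  have alt_heads: "centered_alternating (heads (zip js cs))"
    using len alt index corner centered by (intro centered_alternating_heads_zip) (auto elim: corner_formE)
  have product: "mprod (bmult lm rm) p cs = chain (zip js cs)"
    using len by (simp add: mprod_def chain_def)
  have "\<phi> (fst (chain (zip js cs))) = 0"
    unfolding fst_chain using alt_heads ne len
    by (intro phi_prods_centered_alternating) (auto simp: heads_def)
  then show "\<phi> (fst (mprod (bmult lm rm) p cs)) = 0 \<and> \<psi>' (mprod (bmult lm rm) p cs) = (let n = length cs in
      if odd n \<and> (\<forall>k<n. js ! k = js ! (n - 1 - k))
      then (\<Prod>k<n div 2. \<phi> (fst (bmult lm rm (cs ! k) (cs ! (n - 1 - k))))) * \<psi>' (cs ! (n div 2)) else 0)"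
    unfolding product Let_def psi'_chain_zip[OF len ne alt_heads chain] len rev_eq_iff_nth[symmetric] fst_bprod
    by simp
qed

end

theorem proposition5p3:
  fixes sA :: "complex \<Rightarrow> 'a::ring_1 \<Rightarrow> 'a" and \<phi> :: "'a \<Rightarrow> complex"
    and sF :: "complex \<Rightarrow> 'f::ring \<Rightarrow> 'f"
    and lm :: "'a \<Rightarrow> 'f \<Rightarrow> 'f" and rm :: "'f \<Rightarrow> 'a \<Rightarrow> 'f"
    and \<Phi> :: "'f \<Rightarrow> complex" and q :: 'f
    and I :: "'i set" and A :: "'i \<Rightarrow> 'a set"
  assumes ncps: "ncps_typeB' sA \<phi> sF lm rm \<Phi>"
    and q_idem: "q * q = q"
    and q_norm: "\<Phi> q = 1"
    and q_cai: "cyc_antimon_indep \<phi> lm rm \<Phi> q"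
    and subalg: "\<forall>i\<in>I. unital_subalg sA (A i)"
    and free: "free_family \<phi> I A"
  shows "let p = ((1::'a), - q);
             mult = bmult lm rm;
             \<psi> = (\<lambda>x::'a \<times> 'f. \<phi> (fst x));
             \<psi>' = (\<lambda>x::'a \<times> 'f. \<phi> (fst x) + \<Phi> (snd x))
         in inf_free mult p \<psi> \<psi>' I
              (\<lambda>i. gen_alg bplus (bscale sA sF) mult p
                      {mult (mult p (a, 0)) p | a. a \<in> A i})"
proof -
  interpret B: typeB'_space sA \<phi> sF lm rm \<Phi> q
    using ncps q_idem q_norm q_cai by (rule typeB'_space.intro)
  interpret typeB'_free sA \<phi> sF lm rm \<Phi> q I A
    using B.algebra_state_axioms subalg free
    by (intro typeB'_free.intro B.typeB'_space_axioms free_subalgebras.intro free_subalgebras_axioms.intro)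
  show ?thesis
    using inf_free_corner_subalgebras unfolding Let_def B.\<psi>'_def[abs_def] .
qed

end
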